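(* Let $f,g\in L^2(\mathbb{R})$ and write $V=V(f,g)=U+iW$ with $U,W$ real-valued. Assume that $V\in C^3(\mathbb{R}^2,\mathbb{R}^2)$, that $V(x_0,\omega_0)=0$, and that $\det J_V(x_0,\omega_0)\neq 0$, where \[ J_V(x_0,\omega_0)=\begin{pmatrix} U_x(x_0,\omega_0) & U_\omega(x_0,\omega_0)\\ W_x(x_0,\omega_0) & W_\omega(x_0,\omega_0)\end{pmatrix}. \] Let $\psi(x,\omega)=\arg V(x,\omega)$ denote a (local differentiable) phase of $V$. Then $\lim_{x\to x_0}\frac{\partial\psi}{\partial x}(x,\omega_0)=c$ for some real number $c\in\mathbb{R}$.
   Context: The short-time Fourier transform is $V(f,g)(x,\omega)=\int_{\mathbb{R}} f(t)\overline{g(t-x)}e^{-2\pi i\omega t}\,dt$, regarded as a map $\mathbb{R}^2\to\mathbb{R}^2\cong\mathbb{C}$; $C^k$ refers to real differentiability in $(x,\omega)$ and subscripts denote partial derivatives. At points where $V\neq 0$, a differentiable phase $\psi$ with $V=|V|e^{i\psi}$ exists locally, is unique up to an additive constant in $2\pi\mathbb{Z}$, and its partial derivative is $\frac{\partial\psi}{\partial x}=\frac{U W_x-W U_x}{U^2+W^2}$ (independent of the choice of phase). *)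

theory Defs
  imports "HOL-Analysis.Analysis"
begin

definition stft :: "(real \<Rightarrow> complex) \<Rightarrow> (real \<Rightarrow> complex) \<Rightarrow> real \<times> real \<Rightarrow> complex" where
  "stft f g z = (LINT t|lborel. f t * cnj (g (t - fst z)) * cis (- 2 * pi * snd z * t))"

definition L2 :: "(real \<Rightarrow> complex) \<Rightarrow> bool" where
  "L2 f \<longleftrightarrow> f \<in> borel_measurable lborel \<and> integrable lborel (\<lambda>t. (cmod (f t))\<^sup>2)"

definition px :: "(real \<times> real \<Rightarrow> complex) \<Rightarrow> real \<times> real \<Rightarrow> complex" where
  "px F z = vector_derivative (\<lambda>y. F (y, snd z)) (at (fst z))"

definition pw :: "(real \<times> real \<Rightarrow> complex) \<Rightarrow> real \<times> real \<Rightarrow> complex" where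
  "pw F z = vector_derivative (\<lambda>w. F (fst z, w)) (at (snd z))"

fun Ck :: "nat \<Rightarrow> (real \<times> real \<Rightarrow> complex) \<Rightarrow> bool" where
  "Ck 0 F \<longleftrightarrow> continuous_on UNIV F"
| "Ck (Suc k) F \<longleftrightarrow> continuous_on UNIV F
      \<and> (\<forall>z. (\<lambda>y. F (y, snd z)) differentiable (at (fst z)))
      \<and> (\<forall>z. (\<lambda>w. F (fst z, w)) differentiable (at (snd z)))
      \<and> Ck k (px F) \<and> Ck k (pw F)"

text \<open>x-derivative of the phase: (U W_x - W U_x)/(U^2 + W^2).\<close>
definition phase_dx :: "(real \<times> real \<Rightarrow> complex) \<Rightarrow> real \<times> real \<Rightarrow> real" where
  "phase_dx F z = (Re (F z) * Im (px F z) - Im (F z) * Re (px F z)) / ((Re (F z))\<^sup>2 + (Im (F z))\<^sup>2)"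

end

theory Submission
  imports Defs
begin

text \<open>
  On the line \<open>\<omega> = \<omega>0\<close> write \<open>v(x) = V(x, \<omega>0)\<close>. Then \<open>v(x0) = 0\<close>, and \<open>v'(x0) \<noteq> 0\<close>
  because it is the first column of the invertible Jacobian. Dividing numerator and
  denominator of \<open>\<partial>\<psi>/\<partial>x = Im (conj v \<cdot> v') / |v|\<^sup>2\<close> by \<open>(x - x0)\<^sup>2\<close> rewrites it as
  \<open>Im (conj p \<cdot> q) / |p|\<^sup>2\<close> with \<open>p = v / (x - x0) \<rightarrow> v'(x0)\<close> and
  \<open>q = (v' (x - x0) - v) / (x - x0)\<^sup>2 \<rightarrow> v''(x0) / 2\<close> (l'Hopital), so the limit exists and equals
  \<open>Im (conj v'(x0) \<cdot> v''(x0)) / (2 |v'(x0)|\<^sup>2)\<close>.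
\<close>

lemma tendsto_second_order_quotient:
  fixes f f' f'' :: "real \<Rightarrow> real"
  assumes f': "\<And>y. (f has_real_derivative f' y) (at y)"
    and f'': "\<And>y. (f' has_real_derivative f'' y) (at y)"
    and cont: "isCont f'' a"
  shows "((\<lambda>x. (f' x * (x - a) - (f x - f a)) / (x - a)\<^sup>2) \<longlongrightarrow> f'' a / 2) (at a)"
proof (rule lhopital[where f'="\<lambda>x. f'' x * (x - a)" and g'="\<lambda>x. 2 * (x - a)"])
  have ne: "\<forall>\<^sub>F x in at a. x \<noteq> a"
    by (simp add: eventually_at_filter)
  then show "\<forall>\<^sub>F x in at a. (x - a)\<^sup>2 \<noteq> 0" and "\<forall>\<^sub>F x in at a. 2 * (x - a) \<noteq> 0"
    by simp_all
  have "((\<lambda>x. f' x * (x - a) - (f x - f a)) \<longlongrightarrow> f' a * (a - a) - (f a - f a)) (at a)"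
    using DERIV_isCont[OF f'] DERIV_isCont[OF f''] by (intro tendsto_intros) (simp_all add: isCont_def)
  then show "((\<lambda>x. f' x * (x - a) - (f x - f a)) \<longlongrightarrow> 0) (at a)"
    by simp
  have "((\<lambda>x. (x - a)\<^sup>2) \<longlongrightarrow> (a - a)\<^sup>2) (at a)"
    by (intro tendsto_intros)
  then show "((\<lambda>x. (x - a)\<^sup>2) \<longlongrightarrow> 0) (at a)"
    by simp
  show "\<forall>\<^sub>F x in at a. ((\<lambda>x. f' x * (x - a) - (f x - f a)) has_real_derivative f'' x * (x - a)) (at x)"
    by (intro always_eventually allI) (auto intro!: derivative_eq_intros f' f'')
  show "\<forall>\<^sub>F x in at a. ((\<lambda>x. (x - a)\<^sup>2) has_real_derivative 2 * (x - a)) (at x)"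
    by (intro always_eventually allI) (auto intro!: derivative_eq_intros)
  have "((\<lambda>x. f'' x / 2) \<longlongrightarrow> f'' a / 2) (at a)"
    using cont by (intro tendsto_intros) (simp_all add: isCont_def)
  then show "((\<lambda>x. f'' x * (x - a) / (2 * (x - a))) \<longlongrightarrow> f'' a / 2) (at a)"
    by (rule tendsto_cong[THEN iffD1, rotated]) (use ne in \<open>auto elim!: eventually_mono simp: field_simps\<close>)
qed

lemma phase_quotient_rescale:
  fixes r i r' i' t :: real
  assumes "t \<noteq> 0"
  shows "(r / t * ((i' * t - i) / t\<^sup>2) - i / t * ((r' * t - r) / t\<^sup>2)) / ((r / t)\<^sup>2 + (i / t)\<^sup>2)
       = (r * i' - i * r') / (r\<^sup>2 + i\<^sup>2)"
proof -
  have "r / t * ((i' * t - i) / t\<^sup>2) - i / t * ((r' * t - r) / t\<^sup>2) = (r * i' - i * r') / t\<^sup>2"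
    using assms by (simp add: field_simps power2_eq_square)
  moreover have "(r / t)\<^sup>2 + (i / t)\<^sup>2 = (r\<^sup>2 + i\<^sup>2) / t\<^sup>2"
    by (simp add: power_divide add_divide_distrib)
  ultimately show ?thesis
    using assms by simp
qed

lemma tendsto_phase_derivative_at_simple_zero:
  fixes v v' v'' :: "real \<Rightarrow> complex"
  assumes v': "\<And>y. (v has_vector_derivative v' y) (at y)"
    and v'': "\<And>y. (v' has_vector_derivative v'' y) (at y)"
    and cont: "isCont v'' a"
    and zero: "v a = 0"
    and simple: "v' a \<noteq> 0"
  shows "((\<lambda>x. (Re (v x) * Im (v' x) - Im (v x) * Re (v' x)) / ((Re (v x))\<^sup>2 + (Im (v x))\<^sup>2))
          \<longlongrightarrow> (Re (v' a) * Im (v'' a) - Im (v' a) * Re (v'' a)) / (2 * (cmod (v' a))\<^sup>2)) (at a)"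
proof -
  define r r' r'' where "r x = Re (v x)" and "r' x = Re (v' x)" and "r'' x = Re (v'' x)" for x
  define i i' i'' where "i x = Im (v x)" and "i' x = Im (v' x)" and "i'' x = Im (v'' x)" for x
  have r': "(r has_real_derivative r' y) (at y)" and r'': "(r' has_real_derivative r'' y) (at y)"
    and i': "(i has_real_derivative i' y) (at y)" and i'': "(i' has_real_derivative i'' y) (at y)" for y
    unfolding r_def r'_def r''_def i_def i'_def i''_def
    by (intro derivative_intros v' v'')+
  have "isCont r'' a" "isCont i'' a"
    unfolding r''_def i''_def using cont by simp_all
  moreover have "r a = 0" "i a = 0"
    using zero by (simp_all add: r_def i_def)
  ultimately have q_lims:
      "((\<lambda>x. (r' x * (x - a) - r x) / (x - a)\<^sup>2) \<longlongrightarrow> r'' a / 2) (at a)"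
      "((\<lambda>x. (i' x * (x - a) - i x) / (x - a)\<^sup>2) \<longlongrightarrow> i'' a / 2) (at a)"
    using tendsto_second_order_quotient[OF r' r'', of a] tendsto_second_order_quotient[OF i' i'', of a]
    by simp_all
  have p_lims: "((\<lambda>x. r x / (x - a)) \<longlongrightarrow> r' a) (at a)" "((\<lambda>x. i x / (x - a)) \<longlongrightarrow> i' a) (at a)"
    using r'[of a] i'[of a] \<open>r a = 0\<close> \<open>i a = 0\<close> by (simp_all add: has_field_derivative_iff)
  have norm: "(r' a)\<^sup>2 + (i' a)\<^sup>2 = (cmod (v' a))\<^sup>2"
    by (simp add: r'_def i'_def cmod_power2)
  with simple have "(r' a)\<^sup>2 + (i' a)\<^sup>2 \<noteq> 0"
    by simp
  then have "((\<lambda>x. (r x / (x - a) * ((i' x * (x - a) - i x) / (x - a)\<^sup>2)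
                   - i x / (x - a) * ((r' x * (x - a) - r x) / (x - a)\<^sup>2))
                  / ((r x / (x - a))\<^sup>2 + (i x / (x - a))\<^sup>2))
      \<longlongrightarrow> (r' a * (i'' a / 2) - i' a * (r'' a / 2)) / ((r' a)\<^sup>2 + (i' a)\<^sup>2)) (at a)"
      (is "(?rescaled \<longlongrightarrow> _) _")
    by (intro tendsto_intros p_lims q_lims)
  also have "(r' a * (i'' a / 2) - i' a * (r'' a / 2)) / ((r' a)\<^sup>2 + (i' a)\<^sup>2)
      = (r' a * i'' a - i' a * r'' a) / (2 * (cmod (v' a))\<^sup>2)"
    unfolding norm by (simp add: field_simps)
  finally have lim: "(?rescaled \<longlongrightarrow> (r' a * i'' a - i' a * r'' a) / (2 * (cmod (v' a))\<^sup>2)) (at a)" .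
  have "\<forall>\<^sub>F x in at a. x \<noteq> a"
    by (simp add: eventually_at_filter)
  then have "\<forall>\<^sub>F x in at a. ?rescaled x = (r x * i' x - i x * r' x) / ((r x)\<^sup>2 + (i x)\<^sup>2)"
    by eventually_elim (rule phase_quotient_rescale, simp)
  from Lim_transform_eventually[OF lim this] show ?thesis
    by (simp add: r_def r'_def r''_def i_def i'_def i''_def)
qed

lemma Ck_Suc_imp_Ck: "Ck (Suc k) F \<Longrightarrow> Ck k F"
proof (induction k arbitrary: F)
  case (Suc k)
  then show ?case
    unfolding Ck.simps(2)[of "Suc k" F] Ck.simps(2)[of k F] by blast
qed simp

lemma Ck_Suc_has_px:
  assumes "Ck (Suc k) F"
  shows "((\<lambda>y. F (y, w)) has_vector_derivative px F (x, w)) (at x)"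
proof -
  have "(\<lambda>y. F (y, w)) differentiable (at x)"
    using assms by simp
  then show ?thesis
    by (simp add: px_def vector_derivative_works)
qed

theorem mainTheorem6:
  fixes f g :: "real \<Rightarrow> complex" and x0 \<omega>0 :: real
  assumes "L2 f" and "L2 g"
    and "Ck 3 (stft f g)"
    and "stft f g (x0, \<omega>0) = 0"
    and "Re (px (stft f g) (x0, \<omega>0)) * Im (pw (stft f g) (x0, \<omega>0))
         - Re (pw (stft f g) (x0, \<omega>0)) * Im (px (stft f g) (x0, \<omega>0)) \<noteq> 0"
  shows "\<exists>c::real. ((\<lambda>x. phase_dx (stft f g) (x, \<omega>0)) \<longlongrightarrow> c) (at x0)"
proof -
  define F where "F = stft f g"
  have "Ck (Suc (Suc (Suc 0))) F"
    using assms(3) by (simp only: F_def numeral_3_eq_3)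
  then have C2: "Ck (Suc (Suc 0)) F"
    by (rule Ck_Suc_imp_Ck)
  have v': "((\<lambda>y. F (y, \<omega>0)) has_vector_derivative px F (y, \<omega>0)) (at y)" for y
    using C2 by (rule Ck_Suc_has_px)
  have v'': "((\<lambda>y. px F (y, \<omega>0)) has_vector_derivative px (px F) (y, \<omega>0)) (at y)" for y
    using C2 by (intro Ck_Suc_has_px[of 0]) simp
  have "continuous_on UNIV (px (px F))"
    using C2 by simp
  then have F_xx_cont: "isCont (px (px F)) (x0, \<omega>0)"
    by (simp add: continuous_on_eq_continuous_at)
  have cont: "isCont (\<lambda>y. px (px F) (y, \<omega>0)) x0"
    by (rule isCont_o2[where f="\<lambda>y. (y, \<omega>0)", OF _ F_xx_cont])
      (intro continuous_Pair continuous_ident continuous_const)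
  have zero: "F (x0, \<omega>0) = 0" and simple: "px F (x0, \<omega>0) \<noteq> 0"
    using assms(4,5) by (auto simp: F_def)
  show ?thesis
    using tendsto_phase_derivative_at_simple_zero[OF v' v'' cont zero simple]
    unfolding phase_dx_def F_def by blast
qed

end
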